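(* For every integer $n\ge4$ and every integer $d$, $p_{n,d}(1,2)=p_{n,d}(1,3)$.
   Context: A cycle $(c_1\cdots c_k)$ means $c_1\mapsto c_2\mapsto\cdots\mapsto c_k\mapsto c_1$; $\operatorname{cdes}(c)=\lvert\{t\in[k]:c_t>c_{t+1}\}\rvert$, $\operatorname{casc}(c)=\lvert\{t\in[k]:c_t<c_{t+1}\}\rvert$ with $c_{k+1}=c_1$; the cyclic weight of a cycle is $\min(\operatorname{cdes}(c),\operatorname{casc}(c))$ and the cyclic weight of a permutation is the sum over its cycles. An odd order permutation is one all of whose cycles have odd length. $p_{n,d}(i,j)$ is the number of odd order permutations $\pi$ of $[n]$ with cyclic weight $d$ such that $\pi(i)=n$ and $\pi(n)=j$ (i.e. containing $i\,n\,j$ as a cyclic factor). *)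

theory Defs
  imports "HOL-Combinatorics.Permutations"
begin

text \<open>Writing a cycle as
  (c_1 ... c_k) with c_{t+1} = p c_t, a cyclic descent c_t > c_{t+1} is an element
  y of the cycle with y > p y, and a cyclic ascent one with y < p y.\<close>

definition cyc :: "(nat \<Rightarrow> nat) \<Rightarrow> nat \<Rightarrow> nat set" where
  "cyc p x = {(p ^^ k) x | k. True}"

definition cycles_of :: "nat \<Rightarrow> (nat \<Rightarrow> nat) \<Rightarrow> nat set set" where
  "cycles_of n p = cyc p ` {1..n}"

definition cdes :: "(nat \<Rightarrow> nat) \<Rightarrow> nat set \<Rightarrow> nat" where
  "cdes p C = card {y \<in> C. y > p y}"

definition casc :: "(nat \<Rightarrow> nat) \<Rightarrow> nat set \<Rightarrow> nat" where
  "casc p C = card {y \<in> C. y < p y}"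

definition cyc_weight :: "nat \<Rightarrow> (nat \<Rightarrow> nat) \<Rightarrow> nat" where
  "cyc_weight n p = (\<Sum>C\<in>cycles_of n p. min (cdes p C) (casc p C))"

definition odd_order :: "nat \<Rightarrow> (nat \<Rightarrow> nat) \<Rightarrow> bool" where
  "odd_order n p = (\<forall>C\<in>cycles_of n p. odd (card C))"

definition pnd :: "nat \<Rightarrow> int \<Rightarrow> nat \<Rightarrow> nat \<Rightarrow> nat" where
  "pnd n d i j = card {p. p permutes {1..n} \<and> odd_order n p \<and> int (cyc_weight n p) = d
                         \<and> p i = n \<and> p n = j}"

end

(* Split the permutations counted by p_{n,d}(1,2) according to whether p 2 = 3.
   If p 2 \<noteq> 3, then also p 3 \<noteq> 2 (as p n = 2), so no cycle step goes between 2 and 3;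
   conjugating by the transposition (2 3) therefore keeps every cyclic descent and ascent and
   gives a bijection onto the permutations counted by p_{n,d}(1,3) with p 3 \<noteq> 2.
   If p 2 = 3, the cycle of p through 1 is (1 n 2 3 c_1 ... c_m) with m \<ge> 1 since its length
   is odd. Replacing it by (1 n 3 2 c_m ... c_1) exchanges its numbers of cyclic descents and
   ascents, so the cyclic weight is kept. This replacement is the conjugate of p^-1 by the
   4-cycle (1 2 n 3) restricted to that cycle; taking the whole conjugate is harmless, since on
   the other cycles it is p^-1, which also just exchanges descents and ascents. *)

theory Submission
  imports Defs "HOL-Combinatorics.Orbits"
begin

lemma card_Collect_split:
  assumes "finite A"
  shows "card A = card {x \<in> A. P x} + card {x \<in> A. \<not> P x}"
proof -
  have "A = {x \<in> A. P x} \<union> {x \<in> A. \<not> P x}" by blast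
  then show ?thesis
    using assms by (metis (no_types, lifting) card_Un_disjoint disjoint_iff finite_Un mem_Collect_eq)
qed

lemma card_Collect_cong_outside:
  assumes "finite A" "E \<subseteq> A"
    and "\<And>x. x \<in> A - E \<Longrightarrow> P x \<longleftrightarrow> Q x"
    and "card {x \<in> E. P x} = card {x \<in> E. Q x}"
  shows "card {x \<in> A. P x} = card {x \<in> A. Q x}"
proof -
  have split: "card {x \<in> A. R x} = card {x \<in> E. R x} + card {x \<in> A - E. R x}" for R
  proof -
    have "{x \<in> {x \<in> A. R x}. x \<in> E} = {x \<in> E. R x}"
      "{x \<in> {x \<in> A. R x}. x \<notin> E} = {x \<in> A - E. R x}"
      using assms(2) by blast+
    then show ?thesis using card_Collect_split[of "{x \<in> A. R x}" "\<lambda>x. x \<in> E"] assms(1) by simp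
  qed
  have "{x \<in> A - E. P x} = {x \<in> A - E. Q x}" using assms(3) by blast
  then show ?thesis using split[of P] split[of Q] assms(4) by simp
qed

lemma card_Collect_inv_pairs:
  assumes "inj p" "p ` D = D"
  shows "card {x \<in> D. R (inv p x) x} = card {u \<in> D. R u (p u)}"
proof -
  have "{x \<in> D. R (inv p x) x} = p ` {u \<in> D. R u (p u)}"
  proof (intro set_eqI iffI)
    fix x assume "x \<in> {x \<in> D. R (inv p x) x}"
    moreover from this obtain u where "u \<in> D" "x = p u" using assms(2) by blast
    ultimately show "x \<in> p ` {u \<in> D. R u (p u)}" using assms(1) by auto
  next
    fix x assume "x \<in> p ` {u \<in> D. R u (p u)}"
    then show "x \<in> {x \<in> D. R (inv p x) x}" using assms by auto
  qed
  then show ?thesis by (simp add: card_image inj_on_subset[OF assms(1)])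
qed

lemma cycles_of_eq_orbits:
  assumes "p permutes {1..n}"
  shows "cycles_of n p = (\<lambda>x. orbit p x) ` {1..n}"
proof -
  have "permutation p" using assms by (auto simp: permutation_permutes)
  then show ?thesis unfolding cycles_of_def cyc_def by (simp add: orbit_altdef_permutation)
qed

lemma image_orbit_self:
  assumes "permutation p"
  shows "p ` orbit p x = orbit p x"
  using orbit_inverse[of x p p p] assms by (simp add: permutation_self_in_orbit permutation_orbit_step)

lemma orbit_conj:
  assumes "bij t" "permutation p"
  shows "orbit (t \<circ> p \<circ> inv t) (t x) = t ` orbit p x"
  using assms by (intro orbit_inverse[symmetric]) (simp_all add: permutation_self_in_orbit bij_is_inj)

lemma cycles_of_conj:
  assumes t: "t permutes {1..n}" and p: "p permutes {1..n}"
  shows "cycles_of n (t \<circ> p \<circ> inv t) = (\<lambda>C. t ` C) ` cycles_of n p"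
proof -
  have "t \<circ> p \<circ> inv t permutes {1..n}"
    using t p by (intro permutes_compose permutes_inv)
  then have "cycles_of n (t \<circ> p \<circ> inv t) = (\<lambda>x. orbit (t \<circ> p \<circ> inv t) (t x)) ` {1..n}"
    using permutes_image[OF t] by (metis cycles_of_eq_orbits image_image)
  also have "\<dots> = (\<lambda>C. t ` C) ` cycles_of n p"
    using t p permutes_imp_permutation[OF _ p]
    by (simp add: cycles_of_eq_orbits image_image orbit_conj permutes_bij)
  finally show ?thesis .
qed

lemma cycles_of_inv:
  assumes "p permutes {1..n}"
  shows "cycles_of n (inv p) = cycles_of n p"
  using assms permutes_imp_permutation[OF _ assms]
  by (simp add: cycles_of_eq_orbits permutes_inv orbit_inv_eq)

lemma odd_order_conj:
  assumes "t permutes {1..n}" "p permutes {1..n}"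
  shows "odd_order n (t \<circ> p \<circ> inv t) = odd_order n p"
proof -
  have "card (t ` C) = card C" for C
    by (meson assms(1) card_image inj_on_subset permutes_inj subset_UNIV)
  then show ?thesis unfolding odd_order_def cycles_of_conj[OF assms] by simp
qed

lemma odd_order_inv:
  assumes "p permutes {1..n}"
  shows "odd_order n (inv p) = odd_order n p"
  unfolding odd_order_def cycles_of_inv[OF assms] ..

lemma odd_order_no_4_cycle:
  assumes p: "p permutes {1..n}" and odd: "odd_order n p" and x: "x \<in> {1..n}"
    and distinct: "distinct [x, p x, p (p x), p (p (p x))]"
  shows "p (p (p (p x))) \<noteq> x"
proof
  assume closes: "p (p (p (p x))) = x"
  have "orbit p x = {x, p x, p (p x), p (p (p x))}"
  proof
    show "orbit p x \<subseteq> {x, p x, p (p x), p (p (p x))}"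
    proof
      fix y assume "y \<in> orbit p x"
      then show "y \<in> {x, p x, p (p x), p (p (p x))}" by induction (use closes in auto)
    qed
    show "{x, p x, p (p x), p (p (p x))} \<subseteq> orbit p x"
      using closes orbit.base[of p x] orbit.step by (metis empty_subsetI insert_subset)
  qed
  then have "card (orbit p x) = 4" using distinct by simp
  moreover have "orbit p x \<in> cycles_of n p" using cycles_of_eq_orbits[OF p] x by simp
  ultimately show False using odd unfolding odd_order_def by fastforce
qed

lemma cdes_conj:
  assumes "inj t"
  shows "cdes (t \<circ> p \<circ> inv t) (t ` D) = card {x \<in> D. t (p x) < t x}"
proof -
  have "{y \<in> t ` D. y > (t \<circ> p \<circ> inv t) y} = t ` {x \<in> D. t (p x) < t x}"
    using assms by auto
  then show ?thesis unfolding cdes_def by (simp add: card_image inj_on_subset[OF assms])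
qed

lemma casc_conj:
  assumes "inj t"
  shows "casc (t \<circ> p \<circ> inv t) (t ` D) = card {x \<in> D. t x < t (p x)}"
proof -
  have "{y \<in> t ` D. y < (t \<circ> p \<circ> inv t) y} = t ` {x \<in> D. t x < t (p x)}"
    using assms by auto
  then show ?thesis unfolding casc_def by (simp add: card_image inj_on_subset[OF assms])
qed

lemma cyc_weight_conj:
  assumes t: "t permutes {1..n}" and p: "p permutes {1..n}"
  shows "cyc_weight n (t \<circ> p \<circ> inv t) =
    (\<Sum>C\<in>cycles_of n p. min (card {x \<in> C. t (p x) < t x}) (card {x \<in> C. t x < t (p x)}))"
proof -
  have "inj t" using t by (rule permutes_inj)
  then have "inj_on (\<lambda>C. t ` C) (cycles_of n p)" by (simp add: inj_on_def inj_image_eq_iff)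
  then show ?thesis
    unfolding cyc_weight_def cycles_of_conj[OF t p]
    by (simp add: sum.reindex cdes_conj casc_conj \<open>inj t\<close>)
qed

lemma cyc_weight_conj_inv:
  assumes t: "t permutes {1..n}" and p: "p permutes {1..n}"
  shows "cyc_weight n (t \<circ> inv p \<circ> inv t) =
    (\<Sum>C\<in>cycles_of n p. min (card {u \<in> C. t u < t (p u)}) (card {u \<in> C. t (p u) < t u}))"
proof -
  have "cyc_weight n (t \<circ> inv p \<circ> inv t) =
      (\<Sum>C\<in>cycles_of n p. min (card {x \<in> C. t (inv p x) < t x}) (card {x \<in> C. t x < t (inv p x)}))"
    using cyc_weight_conj[OF t permutes_inv[OF p]] cycles_of_inv[OF p] by simp
  also have "\<dots> = (\<Sum>C\<in>cycles_of n p. min (card {u \<in> C. t u < t (p u)}) (card {u \<in> C. t (p u) < t u}))"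
  proof (rule sum.cong[OF refl])
    fix C assume "C \<in> cycles_of n p"
    then obtain x where "C = orbit p x" using cycles_of_eq_orbits[OF p] by auto
    then have "p ` C = C" using image_orbit_self permutes_imp_permutation[OF _ p] by simp
    note inv_pairs = card_Collect_inv_pairs[OF permutes_inj[OF p] this]
    show "min (card {x \<in> C. t (inv p x) < t x}) (card {x \<in> C. t x < t (inv p x)}) =
        min (card {u \<in> C. t u < t (p u)}) (card {u \<in> C. t (p u) < t u})"
      using inv_pairs[where R = "\<lambda>v w. t v < t w"] inv_pairs[where R = "\<lambda>v w. t w < t v"] by simp
  qed
  finally show ?thesis .
qed

lemma cyc_weight_conj_adjacent_transpose:
  assumes p: "p permutes {1..n}" and i: "1 \<le> i" "Suc i \<le> n"
    and not_adjacent: "p i \<noteq> Suc i" "p (Suc i) \<noteq> i"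
  shows "cyc_weight n (transpose i (Suc i) \<circ> p \<circ> transpose i (Suc i)) = cyc_weight n p"
proof -
  let ?t = "transpose i (Suc i)"
  have t: "?t permutes {1..n}" using i by (intro permutes_swap_id) auto
  have "(?t (p x) < ?t x) = (p x < x)" "(?t x < ?t (p x)) = (x < p x)" for x
    using not_adjacent by (auto simp: transpose_def)
  then show ?thesis
    using cyc_weight_conj[OF t p] by (simp add: cyc_weight_def cdes_def casc_def)
qed

locale tail_reversal =
  fixes n a b :: nat and p \<pi> :: "nat \<Rightarrow> nat"
  assumes p: "p permutes {1..n}" and n: "4 \<le> n" and ab: "{a, b} = {2, 3}"
    and p_1: "p 1 = n" and p_n: "p n = a" and p_a: "p a = b" and p_b: "p b \<noteq> 1"
    and \<pi>: "\<pi> permutes {1..n}"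
    and \<pi>_1: "\<pi> 1 = a" and \<pi>_a: "\<pi> a = n" and \<pi>_n: "\<pi> n = b" and \<pi>_b: "\<pi> b = 1"
    and \<pi>_other: "\<And>x. x \<notin> {1, a, n, b} \<Longrightarrow> \<pi> x = x"
begin

lemma p_permutation: "permutation p"
  using permutes_imp_permutation[OF _ p] by simp

lemma ab_cases: "a = 2 \<and> b = 3 \<or> a = 3 \<and> b = 2"
  using ab by (auto simp: doubleton_eq_iff)

lemma in_orbit: "1 \<in> orbit p 1" "n \<in> orbit p 1" "a \<in> orbit p 1" "b \<in> orbit p 1"
  using permutation_self_in_orbit[OF p_permutation] orbit.base[of p 1] orbit.step
  by (metis p_1 p_n p_a)+

lemma orbit_subset: "orbit p 1 \<subseteq> {1..n}"
  using permutes_orbit_subset[OF p, of 1] n by simp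

lemma orbit_large:
  assumes "x \<in> orbit p 1" "x \<notin> {1, a, n, b}"
  shows "a < x" "b < x"
proof -
  have "x \<in> {1..n}" using orbit_subset assms(1) by blast
  then show "a < x" "b < x" using assms(2) ab_cases by auto
qed

lemma p_b_other: "p b \<in> orbit p 1" "p b \<notin> {1, a, n, b}"
proof -
  show "p b \<in> orbit p 1" using in_orbit(4) by (rule orbit.step)
  have "p b \<noteq> p 1" "p b \<noteq> p n" "p b \<noteq> p a"
    using ab_cases n by (auto simp: permutes_inj[OF p, THEN inj_eq])
  then show "p b \<notin> {1, a, n, b}" using p_b p_1 p_n p_a by auto
qed

text \<open>The elements of the cycle other than 1, a, n, b exceed a and b, and \<pi> sends b to 1; hence
  \<pi> u and \<pi> (p u) compare like u and p u except for u \<in> {1, n, a}.\<close>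

lemma orbit_counts:
  "card {u \<in> orbit p 1. \<pi> u < \<pi> (p u)} = casc p (orbit p 1)"
  "card {u \<in> orbit p 1. \<pi> (p u) < \<pi> u} = cdes p (orbit p 1)"
proof -
  have fin: "finite (orbit p 1)" using orbit_subset finite_subset by blast
  have E: "{1, n, a} \<subseteq> orbit p 1" using in_orbit by auto
  have agree: "(\<pi> u < \<pi> (p u) \<longleftrightarrow> u < p u) \<and> (\<pi> (p u) < \<pi> u \<longleftrightarrow> p u < u)"
    if u: "u \<in> orbit p 1 - {1, n, a}" for u
  proof (cases "u = b")
    case True
    then show ?thesis using p_b_other orbit_large[of "p b"] \<pi>_b \<pi>_other ab_cases by auto
  next
    case False
    then have u_large: "u \<notin> {1, a, n, b}" "\<pi> u = u" using u \<pi>_other by auto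
    have "p u \<in> orbit p 1" using u by (auto intro: orbit.step)
    moreover have "p u \<noteq> n" "p u \<noteq> a" "p u \<noteq> b"
      using u_large p_1 p_n p_a by (auto simp: permutes_inj[OF p, THEN inj_eq])
    ultimately show ?thesis
      using u orbit_large[of u] orbit_large[of "p u"] u_large \<pi>_1 \<pi>_other ab_cases
      by (cases "p u = 1") auto
  qed
  have "{u \<in> {1, n, a}. \<pi> u < \<pi> (p u)} = (if a < b then {1, n} else {n})"
    "{u \<in> {1, n, a}. u < p u} = (if a < b then {1, a} else {1})"
    "{u \<in> {1, n, a}. \<pi> (p u) < \<pi> u} = (if a < b then {a} else {1, a})"
    "{u \<in> {1, n, a}. p u < u} = (if a < b then {n} else {n, a})"
    using ab_cases n p_1 p_n p_a \<pi>_1 \<pi>_a \<pi>_n \<pi>_b by auto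
  then have "card {u \<in> {1, n, a}. \<pi> u < \<pi> (p u)} = card {u \<in> {1, n, a}. u < p u}"
    "card {u \<in> {1, n, a}. \<pi> (p u) < \<pi> u} = card {u \<in> {1, n, a}. p u < u}"
    using ab_cases n by auto
  note card_E = this
  show "card {u \<in> orbit p 1. \<pi> u < \<pi> (p u)} = casc p (orbit p 1)"
    unfolding casc_def by (rule card_Collect_cong_outside[OF fin E _ card_E(1)]) (use agree in blast)
  show "card {u \<in> orbit p 1. \<pi> (p u) < \<pi> u} = cdes p (orbit p 1)"
    unfolding cdes_def by (rule card_Collect_cong_outside[OF fin E _ card_E(2)]) (use agree in blast)
qed

lemma cycle_counts:
  assumes D: "D \<in> cycles_of n p"
  shows "min (card {u \<in> D. \<pi> u < \<pi> (p u)}) (card {u \<in> D. \<pi> (p u) < \<pi> u}) = min (cdes p D) (casc p D)"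
proof (cases "D = orbit p 1")
  case True
  then show ?thesis using orbit_counts by (simp add: min.commute)
next
  case False
  obtain y where y: "D = orbit p y" using D cycles_of_eq_orbits[OF p] by auto
  have same_orbit: "orbit p x = orbit p z" if "x \<in> orbit p z" for x z
    using orbit_cyclic_eq3[OF cyclic_on_orbit'[OF p_permutation] that] .
  have "x \<notin> orbit p 1" if "x \<in> D" for x
    using False same_orbit[of x 1] same_orbit[of x y] that y by auto
  then have fixed: "\<pi> x = x" if "x \<in> D" for x
    using that in_orbit \<pi>_other by (metis insertE singletonD)
  have "\<pi> x = x \<and> \<pi> (p x) = p x" if "x \<in> D" for x
    using fixed that y orbit.step by metis
  then have "{u \<in> D. \<pi> u < \<pi> (p u)} = {u \<in> D. u < p u}" "{u \<in> D. \<pi> (p u) < \<pi> u} = {u \<in> D. p u < u}"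
    by auto
  then show ?thesis unfolding cdes_def casc_def by (simp add: min.commute)
qed

lemma cyc_weight_inv_conj: "cyc_weight n (\<pi> \<circ> inv p \<circ> inv \<pi>) = cyc_weight n p"
proof -
  have "cyc_weight n (\<pi> \<circ> inv p \<circ> inv \<pi>) = (\<Sum>D\<in>cycles_of n p. min (cdes p D) (casc p D))"
    unfolding cyc_weight_conj_inv[OF \<pi> p] by (rule sum.cong[OF refl cycle_counts])
  then show ?thesis unfolding cyc_weight_def[of n p] .
qed

lemma inv_conj_values:
  "(\<pi> \<circ> inv p \<circ> inv \<pi>) 1 = n" "(\<pi> \<circ> inv p \<circ> inv \<pi>) n = b" "(\<pi> \<circ> inv p \<circ> inv \<pi>) b = a"
proof -
  have "inv \<pi> 1 = b" "inv \<pi> n = a" "inv \<pi> b = n" "inv p b = a" "inv p a = n" "inv p n = 1"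
    using \<pi>_a \<pi>_n \<pi>_b p_1 p_n p_a by (simp_all add: permutes_inv_eq[OF \<pi>] permutes_inv_eq[OF p])
  then show "(\<pi> \<circ> inv p \<circ> inv \<pi>) 1 = n" "(\<pi> \<circ> inv p \<circ> inv \<pi>) n = b" "(\<pi> \<circ> inv p \<circ> inv \<pi>) b = a"
    using \<pi>_1 \<pi>_a \<pi>_n by simp_all
qed

end

definition pnd_set :: "nat \<Rightarrow> int \<Rightarrow> nat \<Rightarrow> nat \<Rightarrow> (nat \<Rightarrow> nat) set" where
  "pnd_set n d i j = {p. p permutes {1..n} \<and> odd_order n p \<and> int (cyc_weight n p) = d
                         \<and> p i = n \<and> p n = j}"

lemma pnd_eq_card: "pnd n d i j = card (pnd_set n d i j)"
  unfolding pnd_def pnd_set_def ..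

lemma finite_pnd_set: "finite (pnd_set n d i j)"
  by (rule finite_subset[OF _ finite_permutations[of "{1..n}"]]) (auto simp: pnd_set_def)

lemma inv_conj_inv_conj:
  assumes \<pi>: "\<pi> permutes S" and p: "p permutes S"
  shows "inv \<pi> \<circ> inv (\<pi> \<circ> inv p \<circ> inv \<pi>) \<circ> \<pi> = p"
proof
  fix x
  have q: "\<pi> \<circ> inv p \<circ> inv \<pi> permutes S" using \<pi> p by (intro permutes_compose permutes_inv)
  have "inv (\<pi> \<circ> inv p \<circ> inv \<pi>) (\<pi> x) = \<pi> (p x)"
    using permutes_inverses[OF \<pi>] permutes_inverses[OF p] by (simp add: permutes_inv_eq[OF q])
  then show "(inv \<pi> \<circ> inv (\<pi> \<circ> inv p \<circ> inv \<pi>) \<circ> \<pi>) x = p x"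
    using permutes_inverses(2)[OF \<pi>] by simp
qed

lemma inv_conj_mem_pnd_set:
  assumes n: "4 \<le> n" and ab: "{a, b} = {2, 3}" and p: "p \<in> pnd_set n d 1 a" "p a = b"
    and \<pi>: "\<pi> permutes {1..n}" "\<pi> 1 = a" "\<pi> a = n" "\<pi> n = b" "\<pi> b = 1"
      "\<And>x. x \<notin> {1, a, n, b} \<Longrightarrow> \<pi> x = x"
  shows "\<pi> \<circ> inv p \<circ> inv \<pi> \<in> pnd_set n d 1 b" "(\<pi> \<circ> inv p \<circ> inv \<pi>) b = a"
proof -
  have perm: "p permutes {1..n}" and odd: "odd_order n p" and weight: "int (cyc_weight n p) = d"
    and p_1: "p 1 = n" and p_n: "p n = a"
    using p by (auto simp: pnd_set_def)
  have "distinct [1, n, a, b]" using n ab by (auto simp: doubleton_eq_iff)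
  then have "p b \<noteq> 1"
    using odd_order_no_4_cycle[OF perm odd, of 1] n p_1 p_n p(2) by simp
  then interpret tail_reversal n a b p \<pi>
    using n ab perm p_1 p_n p(2) \<pi> by unfold_locales
  have "\<pi> \<circ> inv p \<circ> inv \<pi> permutes {1..n}" using \<pi>(1) perm by (intro permutes_compose permutes_inv)
  moreover have "odd_order n (\<pi> \<circ> inv p \<circ> inv \<pi>)"
    using odd_order_conj[OF \<pi>(1) permutes_inv[OF perm]] odd_order_inv[OF perm] odd by simp
  ultimately show "\<pi> \<circ> inv p \<circ> inv \<pi> \<in> pnd_set n d 1 b"
    using inv_conj_values cyc_weight_inv_conj weight unfolding pnd_set_def by simp
  show "(\<pi> \<circ> inv p \<circ> inv \<pi>) b = a" by (rule inv_conj_values)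
qed

lemma card_pnd_set_adjacent:
  assumes n: "4 \<le> n"
  shows "card {p \<in> pnd_set n d 1 2. p 2 = 3} = card {p \<in> pnd_set n d 1 3. p 3 = 2}"
proof -
  define \<pi> :: "nat \<Rightarrow> nat" where "\<pi> = transpose 1 3 \<circ> transpose 1 n \<circ> transpose 1 2"
  have \<pi>: "\<pi> permutes {1..n}"
    using n unfolding \<pi>_def by (intro permutes_compose permutes_swap_id) auto
  have \<pi>_values: "\<pi> 1 = 2" "\<pi> 2 = n" "\<pi> n = 3" "\<pi> 3 = 1" "\<And>x. x \<notin> {1, 2, n, 3} \<Longrightarrow> \<pi> x = x"
    using n by (auto simp: \<pi>_def transpose_def)
  have inv_\<pi>_values:
    "inv \<pi> 1 = 3" "inv \<pi> 3 = n" "inv \<pi> n = 2" "inv \<pi> 2 = 1" "\<And>x. x \<notin> {1, 3, n, 2} \<Longrightarrow> inv \<pi> x = x"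
    using \<pi>_values by (auto simp: permutes_inv_eq[OF \<pi>])
  have forward: "\<pi> \<circ> inv p \<circ> inv \<pi> \<in> {s \<in> pnd_set n d 1 3. s 3 = 2}"
    if "p \<in> pnd_set n d 1 2" "p 2 = 3" for p
    using inv_conj_mem_pnd_set[OF n _ that \<pi> \<pi>_values] by simp
  have backward: "inv \<pi> \<circ> inv s \<circ> \<pi> \<in> {p \<in> pnd_set n d 1 2. p 2 = 3}"
    if "s \<in> pnd_set n d 1 3" "s 3 = 2" for s
    using inv_conj_mem_pnd_set[OF n _ that permutes_inv[OF \<pi>] inv_\<pi>_values] permutes_inv_inv[OF \<pi>]
    by (simp add: insert_commute)
  have "bij_betw (\<lambda>p. \<pi> \<circ> inv p \<circ> inv \<pi>)
      {p \<in> pnd_set n d 1 2. p 2 = 3} {s \<in> pnd_set n d 1 3. s 3 = 2}"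
  proof (rule bij_betw_byWitness[where f' = "\<lambda>s. inv \<pi> \<circ> inv s \<circ> \<pi>"])
    show "\<forall>p \<in> {p \<in> pnd_set n d 1 2. p 2 = 3}. inv \<pi> \<circ> inv (\<pi> \<circ> inv p \<circ> inv \<pi>) \<circ> \<pi> = p"
      using inv_conj_inv_conj[OF \<pi>] by (auto simp: pnd_set_def)
    show "\<forall>s \<in> {s \<in> pnd_set n d 1 3. s 3 = 2}. \<pi> \<circ> inv (inv \<pi> \<circ> inv s \<circ> \<pi>) \<circ> inv \<pi> = s"
      using inv_conj_inv_conj[OF permutes_inv[OF \<pi>]] permutes_inv_inv[OF \<pi>] by (auto simp: pnd_set_def)
  qed (use forward backward in blast)+
  then show ?thesis by (rule bij_betw_same_card)
qed

lemma transpose_conj_mem_pnd_set: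
  assumes n: "4 \<le> n" and jk: "{j, k} = {2, 3}" and p: "p \<in> pnd_set n d 1 j" "p j \<noteq> k"
  shows "transpose 2 3 \<circ> p \<circ> transpose 2 3 \<in> pnd_set n d 1 k"
    "(transpose 2 3 \<circ> p \<circ> transpose 2 3) k \<noteq> j"
proof -
  let ?t = "transpose (2::nat) 3"
  have perm: "p permutes {1..n}" and odd: "odd_order n p" and weight: "int (cyc_weight n p) = d"
    and p_1: "p 1 = n" and p_n: "p n = j"
    using p by (auto simp: pnd_set_def)
  have jk_cases: "j = 2 \<and> k = 3 \<or> j = 3 \<and> k = 2" using jk by (auto simp: doubleton_eq_iff)
  have t: "?t permutes {1..n}" using n by (intro permutes_swap_id) auto
  have "k \<noteq> n" using jk_cases n by auto
  then have "p k \<noteq> j" using p_n permutes_inj[OF perm] by (metis injD)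
  then have not_adjacent: "p 2 \<noteq> Suc 2" "p (Suc 2) \<noteq> 2" using jk_cases p(2) by auto
  have "cyc_weight n (?t \<circ> p \<circ> ?t) = cyc_weight n p"
    using cyc_weight_conj_adjacent_transpose[OF perm _ _ not_adjacent] n by simp
  moreover have "odd_order n (?t \<circ> p \<circ> ?t)"
    using odd_order_conj[OF t perm] odd by simp
  moreover have "?t \<circ> p \<circ> ?t permutes {1..n}" using t perm by (intro permutes_compose)
  moreover have t_values: "?t 1 = 1" "?t n = n" "?t j = k" "?t k = j"
    using n jk_cases by auto
  ultimately show "?t \<circ> p \<circ> ?t \<in> pnd_set n d 1 k"
    using weight p_1 p_n unfolding pnd_set_def by simp
  show "(?t \<circ> p \<circ> ?t) k \<noteq> j"
    using p(2) t_values(3,4) by (metis comp_apply transpose_involutory)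
qed

lemma card_pnd_set_nonadjacent:
  assumes n: "4 \<le> n"
  shows "card {p \<in> pnd_set n d 1 2. p 2 \<noteq> 3} = card {p \<in> pnd_set n d 1 3. p 3 \<noteq> 2}"
proof -
  let ?conj = "\<lambda>p. transpose (2::nat) 3 \<circ> p \<circ> transpose 2 3"
  have "bij_betw ?conj {p \<in> pnd_set n d 1 2. p 2 \<noteq> 3} {p \<in> pnd_set n d 1 3. p 3 \<noteq> 2}"
  proof (rule bij_betw_byWitness[where f' = ?conj])
    show "?conj ` {p \<in> pnd_set n d 1 2. p 2 \<noteq> 3} \<subseteq> {p \<in> pnd_set n d 1 3. p 3 \<noteq> 2}"
      using transpose_conj_mem_pnd_set[OF n, of 2 3] by auto
    show "?conj ` {p \<in> pnd_set n d 1 3. p 3 \<noteq> 2} \<subseteq> {p \<in> pnd_set n d 1 2. p 2 \<noteq> 3}"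
      using transpose_conj_mem_pnd_set[OF n, of 3 2] by (auto simp: insert_commute)
  qed (simp_all add: fun_eq_iff)
  then show ?thesis by (rule bij_betw_same_card)
qed

theorem lemma4p2:
  fixes n :: nat and d :: int
  assumes "n \<ge> 4"
  shows "pnd n d 1 2 = pnd n d 1 3"
proof -
  have "pnd n d 1 2 = card {p \<in> pnd_set n d 1 2. p 2 = 3} + card {p \<in> pnd_set n d 1 2. p 2 \<noteq> 3}"
    unfolding pnd_eq_card using finite_pnd_set by (rule card_Collect_split)
  also have "\<dots> = card {p \<in> pnd_set n d 1 3. p 3 = 2} + card {p \<in> pnd_set n d 1 3. p 3 \<noteq> 2}"
    using card_pnd_set_adjacent[OF assms] card_pnd_set_nonadjacent[OF assms] by simp
  also have "\<dots> = pnd n d 1 3"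
    unfolding pnd_eq_card using finite_pnd_set by (rule card_Collect_split[symmetric])
  finally show ?thesis .
qed

end
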